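(* Let $k$ and $n$ be positive integers with $1 \leqslant k<n$. Suppose that there exists a prime $p>\max\{(k+2)(k+3)/2,\ 3k+8\}$ such that \[ \frac{n}{k+3}<p \leqslant \frac{n}{k+1}. \] Then for every $i\in\{1,2,\ldots,n\}$, the number \[ S(n,i,k)=\sum_{\substack{1 \leqslant i_1<i_2<\cdots<i_k \leqslant n,\\ i_j \neq i \text{ for } j=1,2,\ldots,k}} \frac{1}{i_1 i_2 \cdots i_k} \] is not an integer.
   Context: For integers $n,i,k$ with $1\leqslant k<n$ and $1\leqslant i\leqslant n$, $S(n,i,k)$ denotes the $k$-th elementary symmetric function of the $n-1$ numbers $\{1,1/2,\ldots,1/n\}\setminus\{1/i\}$. *)

theory Defs
  imports Complex_Main "HOL-Computational_Algebra.Primes"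
begin

definition S :: "nat \<Rightarrow> nat \<Rightarrow> nat \<Rightarrow> real" where
  "S n i k = (\<Sum>T\<in>{T. T \<subseteq> {1..n} - {i} \<and> card T = k}. \<Prod>j\<in>T. 1 / real j)"

end

(* Let p be the given prime, D = {1..n} - {i}, Q the set of multiples of p in D and m = n div p,
   so that k + 1 <= m <= k + 2 < p.  After multiplication by p^k * prod (D - Q) * prod (Q / p),
   the term 1 / prod T of S(n,i,k) becomes an integer that is divisible by p unless T consists
   of multiples of p; those remaining terms add up to prod (D - Q) * e_{|Q|-k}(Q / p).  As Q / p
   is {1..m} with at most one point removed, the degree |Q| - k is 0, 1 or 2, and
   e_0 = 1, 0 < e_1 <= m (m + 1) / 2 < p, 24 e_2({1..m}) = (m - 1) m (m + 1) (3 m + 2)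
   with every factor below p.  So p does not divide e_{|Q|-k}(Q / p), whereas an integral
   S(n,i,k) would force it to. *)

theory Submission
  imports Defs
begin

definition esym :: "('a \<Rightarrow> 'b::comm_semiring_1) \<Rightarrow> 'a set \<Rightarrow> nat \<Rightarrow> 'b" where
  "esym f X r = (\<Sum>T\<in>{T. T \<subseteq> X \<and> card T = r}. \<Prod>x\<in>T. f x)"

lemma esym_0 [simp]:
  assumes "finite X"
  shows "esym f X 0 = 1"
proof -
  have "{T. T \<subseteq> X \<and> card T = 0} = {{}}"
    using assms by (auto simp: card_eq_0_iff intro: finite_subset)
  then show ?thesis
    by (simp add: esym_def)
qed

lemma esym_1: "esym f X 1 = (\<Sum>x\<in>X. f x)"
  unfolding esym_def
  by (rule sum.reindex_bij_witness[where i="\<lambda>x. {x}" and j=the_elem])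
     (auto simp: card_1_singleton_iff)

lemma esym_insert:
  assumes "finite X" "x \<notin> X"
  shows "esym f (insert x X) (Suc r) = esym f X (Suc r) + f x * esym f X r"
proof -
  let ?sub = "\<lambda>Y s. {T. T \<subseteq> Y \<and> card T = s}"
  have fin: "finite T" if "T \<subseteq> X" for T
    using that assms(1) by (rule finite_subset)
  have subsets: "?sub (insert x X) (Suc r) = ?sub X (Suc r) \<union> insert x ` ?sub X r"
  proof (intro equalityI subsetI)
    fix T assume "T \<in> ?sub (insert x X) (Suc r)"
    then have T: "T - {x} \<subseteq> X" "card T = Suc r" "finite T"
      using fin[of "T - {x}"] by auto
    show "T \<in> ?sub X (Suc r) \<union> insert x ` ?sub X r"
    proof (cases "x \<in> T")
      case True
      then have "T = insert x (T - {x})" "card (T - {x}) = r"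
        using T by auto
      then show ?thesis
        using T(1) by blast
    qed (use T in auto)
  next
    fix T assume "T \<in> ?sub X (Suc r) \<union> insert x ` ?sub X r"
    then show "T \<in> ?sub (insert x X) (Suc r)"
    proof (elim UnE imageE)
      fix T' assume T': "T = insert x T'" "T' \<in> ?sub X r"
      then have "finite T'" "x \<notin> T'"
        using fin assms(2) by auto
      then show ?thesis
        using T' by auto
    qed auto
  qed
  have "inj_on (insert x) (?sub X r)"
    using assms(2) by (auto simp: inj_on_def)
  moreover have "?sub X (Suc r) \<inter> insert x ` ?sub X r = {}"
    using assms(2) by auto
  moreover have "finite (?sub X s)" for s
    using assms(1) by auto
  ultimately have "esym f (insert x X) (Suc r)
      = esym f X (Suc r) + (\<Sum>T\<in>?sub X r. prod f (insert x T))"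
    unfolding esym_def subsets by (simp add: sum.union_disjoint sum.reindex)
  also have "(\<Sum>T\<in>?sub X r. prod f (insert x T)) = f x * esym f X r"
    unfolding esym_def sum_distrib_left
    by (intro sum.cong refl) (use assms(2) in \<open>auto intro!: prod.insert fin\<close>)
  finally show ?thesis .
qed

lemma esym_complement:
  assumes "finite X" "r \<le> card X"
  shows "esym f X (card X - r) = (\<Sum>A\<in>{A. A \<subseteq> X \<and> card A = r}. \<Prod>x\<in>X - A. f x)"
  unfolding esym_def
proof (rule sum.reindex_bij_witness[where i="\<lambda>A. X - A" and j="\<lambda>A. X - A"])
  fix A assume "A \<in> {A. A \<subseteq> X \<and> card A = card X - r}"
  then show "X - (X - A) = A" "X - A \<in> {A. A \<subseteq> X \<and> card A = r}"
    using assms by (auto simp: card_Diff_subset finite_subset)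
next
  fix A assume "A \<in> {A. A \<subseteq> X \<and> card A = r}"
  then show "X - (X - A) = A" "X - A \<in> {A. A \<subseteq> X \<and> card A = card X - r}"
    using assms by (auto simp: card_Diff_subset finite_subset)
qed (simp add: double_diff)

lemma sum_card_subsets_image:
  assumes "inj_on h X"
  shows "(\<Sum>T\<in>{T. T \<subseteq> X \<and> card T = r}. g (h ` T))
       = (\<Sum>A\<in>{A. A \<subseteq> h ` X \<and> card A = r}. g A)"
proof -
  have inj: "inj_on (image h) {T. T \<subseteq> X \<and> card T = r}"
    using inj_on_image_Pow[OF assms] by (rule inj_on_subset) auto
  have "image h ` {T. T \<subseteq> X \<and> card T = r} = {A. A \<subseteq> h ` X \<and> card A = r}"
    using assms by (auto simp: subset_image_iff card_image inj_on_subset)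
  then show ?thesis
    using sum.reindex[OF inj, of g] by simp
qed

lemma esym_image_complement:
  assumes "finite X" "inj_on h X" "r \<le> card X"
  shows "esym (\<lambda>x. x) (h ` X) (card X - r)
       = (\<Sum>T\<in>{T. T \<subseteq> X \<and> card T = r}. \<Prod>(h ` X - h ` T))"
  using assms esym_complement[of "h ` X" r "\<lambda>x. x"]
    sum_card_subsets_image[OF assms(2), of "\<lambda>A. \<Prod>(h ` X - A)" r]
  by (simp add: card_image)

lemma prod_multiples:
  fixes A :: "nat set"
  assumes "\<forall>j\<in>A. p dvd j" "0 < p"
  shows "\<Prod>A = p ^ card A * \<Prod>((\<lambda>j. j div p) ` A)"
proof -
  have "inj_on (\<lambda>j. j div p) A"
    using assms by (intro inj_onI) (metis dvd_div_mult_self)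
  then have "\<Prod>((\<lambda>j. j div p) ` A) = (\<Prod>j\<in>A. j div p)"
    by (rule prod.reindex_cong) auto
  moreover have "\<Prod>A = (\<Prod>j\<in>A. p * (j div p))"
    using assms(1) by (intro prod.cong) auto
  ultimately show ?thesis
    by (simp add: prod.distrib)
qed

lemma prime_power_mult_common_denominator:
  fixes D T :: "nat set" and p :: nat
  defines "Q \<equiv> {j\<in>D. p dvd j}"
  assumes "finite D" "0 < p" "T \<subseteq> D"
  shows "p ^ card T * (\<Prod>(D - Q) * \<Prod>((\<lambda>j. j div p) ` Q))
       = \<Prod>T * (p ^ card (T - Q) * \<Prod>(D - Q - T)
            * \<Prod>((\<lambda>j. j div p) ` Q - (\<lambda>j. j div p) ` (T \<inter> Q)))"
proof -
  let ?q = "\<lambda>j. j div p"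
  have fin: "finite T" "finite Q"
    using assms finite_subset by (auto simp: Q_def)
  have "\<Prod>(D - Q) = \<Prod>(D - Q - (T - Q)) * \<Prod>(T - Q)"
    using assms(2,4) by (intro prod.subset_diff) auto
  moreover have "D - Q - (T - Q) = D - Q - T"
    by blast
  moreover have "\<Prod>(?q ` Q) = \<Prod>(?q ` Q - ?q ` (T \<inter> Q)) * \<Prod>(?q ` (T \<inter> Q))"
    using prod.subset_diff[of "?q ` (T \<inter> Q)" "?q ` Q" id] fin by auto
  moreover have "\<Prod>T = p ^ card (T \<inter> Q) * \<Prod>(?q ` (T \<inter> Q)) * \<Prod>(T - Q)"
    using prod.Int_Diff[OF fin(1), of id Q] prod_multiples[of "T \<inter> Q" p] assms(3)
    by (simp add: Q_def)
  moreover have "card T = card (T \<inter> Q) + card (T - Q)"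
    using card_Int_Diff[OF fin(1)] .
  ultimately show ?thesis
    by (simp add: power_add mult_ac)
qed

lemma esym_inverse_clear_denominators:
  fixes D :: "nat set" and p k :: nat
  defines "Q \<equiv> {j\<in>D. p dvd j}"
  defines "Q' \<equiv> (\<lambda>j. j div p) ` Q"
  assumes "finite D" "0 \<notin> D" "0 < p"
  shows "real (p ^ k * (\<Prod>(D - Q) * \<Prod>Q')) * esym (\<lambda>j. 1 / real j) D k
       = real (\<Sum>T\<in>{T. T \<subseteq> D \<and> card T = k}.
                 p ^ card (T - Q) * \<Prod>(D - Q - T) * \<Prod>(Q' - (\<lambda>j. j div p) ` (T \<inter> Q)))"
  unfolding esym_def sum_distrib_left of_nat_sum
proof (intro sum.cong refl)
  fix T assume T: "T \<in> {T. T \<subseteq> D \<and> card T = k}"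
  then have "0 < \<Prod>T"
    using assms(4) by (intro prod_pos) (metis (mono_tags) gr0I mem_Collect_eq subsetD)
  moreover have "p ^ k * (\<Prod>(D - Q) * \<Prod>Q')
      = \<Prod>T * (p ^ card (T - Q) * \<Prod>(D - Q - T) * \<Prod>(Q' - (\<lambda>j. j div p) ` (T \<inter> Q)))"
    using prime_power_mult_common_denominator[OF assms(3,5), of T] T
    unfolding Q_def Q'_def by simp
  ultimately show "real (p ^ k * (\<Prod>(D - Q) * \<Prod>Q')) * (\<Prod>j\<in>T. 1 / real j)
      = real (p ^ card (T - Q) * \<Prod>(D - Q - T) * \<Prod>(Q' - (\<lambda>j. j div p) ` (T \<inter> Q)))"
    by (simp add: prod_dividef flip: of_nat_prod)
qed

lemma dvd_if_of_nat_mult_Ints: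
  assumes "real a * x = real b" "x \<in> \<int>"
  shows "a dvd b"
proof -
  obtain z where "x = of_int z"
    using assms(2) by (auto elim: Ints_cases)
  then have "int b = int a * z"
    using assms(1) by (metis of_int_eq_iff of_int_mult of_int_of_nat_eq)
  then show ?thesis
    by (metis dvd_triv_left int_dvd_int_iff)
qed

lemma dvd_sum_subset:
  fixes f :: "'a \<Rightarrow> 'b::comm_semiring_1_cancel"
  assumes "finite A" "B \<subseteq> A" "d dvd (\<Sum>x\<in>A. f x)"
    and "\<And>x. x \<in> A - B \<Longrightarrow> d dvd f x"
  shows "d dvd (\<Sum>x\<in>B. f x)"
  using assms sum.subset_diff[OF assms(2,1), of f] by (metis dvd_add_right_iff dvd_sum)

lemma prime_dvd_esym_quotients:
  fixes D :: "nat set" and p k :: nat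
  defines "Q \<equiv> {j\<in>D. p dvd j}"
  defines "Q' \<equiv> (\<lambda>j. j div p) ` Q"
  assumes "finite D" "0 \<notin> D" "prime p" "0 < k" "k \<le> card Q'"
    and "esym (\<lambda>j. 1 / real j) D k \<in> \<int>"
  shows "p dvd esym (\<lambda>x. x) Q' (card Q' - k)"
proof -
  let ?q = "\<lambda>j. j div p" and ?subsets = "\<lambda>X. {T. T \<subseteq> X \<and> card T = k}"
  define cofactor where
    "cofactor T = p ^ card (T - Q) * \<Prod>(D - Q - T) * \<Prod>(Q' - ?q ` (T \<inter> Q))" for T
  have "p ^ k * (\<Prod>(D - Q) * \<Prod>Q') dvd (\<Sum>T\<in>?subsets D. cofactor T)"
    using esym_inverse_clear_denominators[OF assms(3,4) prime_gt_0_nat[OF assms(5)], of k] assms(8)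
    unfolding cofactor_def Q_def Q'_def by (rule dvd_if_of_nat_mult_Ints)
  moreover have "p dvd p ^ k * (\<Prod>(D - Q) * \<Prod>Q')"
    using assms(6) by (intro dvd_mult2 dvd_power) simp
  ultimately have "p dvd (\<Sum>T\<in>?subsets D. cofactor T)"
    by (rule dvd_trans[rotated])
  then have "p dvd (\<Sum>T\<in>?subsets Q. cofactor T)"
  proof (rule dvd_sum_subset[rotated 2])
    show "finite (?subsets D)" "?subsets Q \<subseteq> ?subsets D"
      using assms(3) by (auto simp: Q_def)
    fix T assume "T \<in> ?subsets D - ?subsets Q"
    then have "finite (T - Q)" "T - Q \<noteq> {}"
      using assms(3) finite_subset by auto
    then have "card (T - Q) \<noteq> 0"
      by simp
    then show "p dvd cofactor T"
      unfolding cofactor_def by (simp add: dvd_power)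
  qed
  also have "(\<Sum>T\<in>?subsets Q. cofactor T)
      = \<Prod>(D - Q) * (\<Sum>T\<in>?subsets Q. \<Prod>(Q' - ?q ` T))"
    unfolding sum_distrib_left
  proof (intro sum.cong refl)
    fix T assume "T \<in> ?subsets Q"
    then have "T - Q = {}" "D - Q - T = D - Q" "T \<inter> Q = T"
      by auto
    then show "cofactor T = \<Prod>(D - Q) * \<Prod>(Q' - ?q ` T)"
      unfolding cofactor_def by (simp only: card.empty power_0 mult_1_left)
  qed
  also have "(\<Sum>T\<in>?subsets Q. \<Prod>(Q' - ?q ` T)) = esym (\<lambda>x. x) Q' (card Q' - k)"
  proof -
    have "inj_on ?q Q"
      by (intro inj_onI) (metis Q_def dvd_div_mult_self mem_Collect_eq)
    moreover have "finite Q"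
      using assms(3) by (simp add: Q_def)
    ultimately show ?thesis
      using esym_image_complement[of Q ?q k] assms(7) by (simp add: card_image Q'_def)
  qed
  moreover have "\<not> p dvd \<Prod>(D - Q)"
    using assms(3,5) by (simp add: prime_dvd_prod_iff Q_def)
  ultimately show ?thesis
    using assms(5) by (simp add: prime_dvd_mult_iff)
qed

lemma esym_2_atLeastAtMost:
  "24 * esym (\<lambda>x. x) {1..m::nat} 2 = (m - 1) * m * (m + 1) * (3 * m + 2)"
proof (induction m)
  case 0
  then show ?case
    by (simp add: esym_def)
next
  case (Suc m)
  have gauss: "2 * \<Sum>{1..m} = m * (m + 1)"
    using double_gauss_sum_from_Suc_0[of m, where 'a=nat] by simp
  have step: "esym (\<lambda>x. x) {1..Suc m} 2 = esym (\<lambda>x. x) {1..m} 2 + Suc m * \<Sum>{1..m}"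
    using esym_insert[of "{1..m}" "Suc m" "\<lambda>x. x" 1]
    by (simp only: atLeastAtMostSuc_conv le_add1 Suc_1 esym_1) simp
  have "24 * esym (\<lambda>x. x) {1..Suc m} 2
      = 24 * esym (\<lambda>x. x) {1..m} 2 + 12 * Suc m * (2 * \<Sum>{1..m})"
    unfolding step by (simp add: algebra_simps)
  also have "\<dots> = (m - 1) * m * (m + 1) * (3 * m + 2) + 12 * Suc m * (m * (m + 1))"
    by (simp only: Suc.IH gauss)
  also have "\<dots> = (Suc m - 1) * Suc m * (Suc m + 1) * (3 * Suc m + 2)"
    by (cases m) (simp_all add: algebra_simps)
  finally show ?case .
qed

lemma not_prime_dvd_esym_low_degree:
  fixes X :: "nat set"
  assumes "prime p" "X \<subseteq> {1..m}" "0 < k" "k \<le> card X" "m \<le> k + 2"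
    and "m * (m + 1) < 2 * p" "3 * m + 2 < p"
  shows "\<not> p dvd esym (\<lambda>x. x) X (card X - k)"
proof -
  have fin: "finite X" and card_le: "card X \<le> m"
    using assms(2) finite_subset card_mono[of "{1..m}" X] by auto
  have gauss: "2 * \<Sum>{1..m} = m * (m + 1)"
    using double_gauss_sum_from_Suc_0[of m, where 'a=nat] by simp
  have "card X - k = 0 \<or> card X - k = 1 \<or> card X - k = 2"
    using card_le assms(5) by linarith
  moreover have "card X - k = 2 \<Longrightarrow> X = {1..m}"
    using assms(2,5) card_le card_subset_eq[of "{1..m}" X] by simp
  ultimately consider "card X - k = 0" | "card X - k = 1" | "card X - k = 2" "X = {1..m}"
    by (elim disjE) auto
  then show ?thesis
  proof cases
    case 1
    then show ?thesis
      using fin assms(1) by auto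
  next
    case 2
    then have "X \<noteq> {}"
      using assms(3) by auto
    then obtain x where "x \<in> X"
      by blast
    then have "1 \<le> x" "x \<le> \<Sum>X"
      using assms(2) fin by (auto intro: member_le_sum)
    then have "0 < \<Sum>X"
      by simp
    moreover have "\<Sum>X \<le> \<Sum>{1..m}"
      using assms(2) by (intro sum_mono2) auto
    then have "\<Sum>X < p"
      using gauss assms(6) by linarith
    moreover have "esym (\<lambda>x. x) X (card X - k) = \<Sum>X"
      unfolding 2 by (rule esym_1)
    ultimately show ?thesis
      by (simp add: nat_dvd_not_less)
  next
    case 3
    then have "m = k + 2"
      using card_le assms(5) by simp
    have factors: "\<not> p dvd f" if "f \<in> {m - 1, m, m + 1, 3 * m + 2}" for f
    proof -
      have "0 < f" "f < p"
        using that \<open>m = k + 2\<close> assms(3,7) by auto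
      then show ?thesis
        by (rule nat_dvd_not_less)
    qed
    show ?thesis
    proof
      assume "p dvd esym (\<lambda>x. x) X (card X - k)"
      then have "p dvd 24 * esym (\<lambda>x. x) {1..m} 2"
        using 3 by simp
      then have "p dvd (m - 1) * m * (m + 1) * (3 * m + 2)"
        by (simp only: esym_2_atLeastAtMost)
      then show False
        using factors by (simp only: prime_dvd_mult_iff[OF assms(1)]) blast
    qed
  qed
qed

lemma image_div_multiples_atLeastAtMost:
  fixes p n i :: nat
  assumes "0 < p"
  shows "(\<lambda>j. j div p) ` {j \<in> {1..n} - {i}. p dvd j} \<subseteq> {1..n div p}"
    and "{1..n div p} - {i div p} \<subseteq> (\<lambda>j. j div p) ` {j \<in> {1..n} - {i}. p dvd j}"
proof -
  show "(\<lambda>j. j div p) ` {j \<in> {1..n} - {i}. p dvd j} \<subseteq> {1..n div p}"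
  proof
    fix a assume "a \<in> (\<lambda>j. j div p) ` {j \<in> {1..n} - {i}. p dvd j}"
    then obtain j where j: "j \<in> {1..n}" "p dvd j" "a = j div p"
      by auto
    then have "1 \<le> a"
      using assms by (auto elim!: dvdE)
    moreover have "a \<le> n div p"
      using j by (simp add: div_le_mono)
    ultimately show "a \<in> {1..n div p}"
      by simp
  qed
  show "{1..n div p} - {i div p} \<subseteq> (\<lambda>j. j div p) ` {j \<in> {1..n} - {i}. p dvd j}"
  proof
    fix a assume a: "a \<in> {1..n div p} - {i div p}"
    then have "p * a \<in> {j \<in> {1..n} - {i}. p dvd j}"
      using assms by (auto simp: less_eq_div_iff_mult_less_eq mult.commute)
    moreover have "a = p * a div p"
      using assms by simp
    ultimately show "a \<in> (\<lambda>j. j div p) ` {j \<in> {1..n} - {i}. p dvd j}"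
      by blast
  qed
qed

lemma esym_inverse_not_Ints:
  fixes n k p i :: nat
  assumes "prime p" "0 < k" "(k + 1) * p \<le> n" "n < (k + 3) * p"
    and "(k + 2) * (k + 3) < 2 * p" "3 * k + 8 < p"
  shows "esym (\<lambda>j. 1 / real j) ({1..n} - {i}) k \<notin> \<int>"
proof
  assume Ints: "esym (\<lambda>j. 1 / real j) ({1..n} - {i}) k \<in> \<int>"
  have p0: "0 < p"
    using assms(1) prime_gt_0_nat by blast
  define m where "m = n div p"
  have "k + 1 \<le> m" "m < k + 3"
    using assms(3,4) p0 by (simp_all add: m_def less_eq_div_iff_mult_less_eq div_less_iff_less_mult)
  then have m: "k + 1 \<le> m" "m \<le> k + 2"
    by simp_all
  define Q' where "Q' = (\<lambda>j. j div p) ` {j \<in> {1..n} - {i}. p dvd j}"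
  have Q': "Q' \<subseteq> {1..m}" "{1..m} - {i div p} \<subseteq> Q'"
    using image_div_multiples_atLeastAtMost[OF p0, of n i] by (simp_all add: Q'_def m_def)
  then have "k \<le> card Q'"
    using m diff_card_le_card_Diff[of "{i div p}" "{1..m}"]
      card_mono[OF finite_subset[OF Q'(1)] Q'(2)]
    by simp
  have "m * (m + 1) \<le> (k + 2) * (k + 3)"
    using m by (intro mult_mono) auto
  then have "\<not> p dvd esym (\<lambda>x. x) Q' (card Q' - k)"
    using assms m \<open>k \<le> card Q'\<close>
    by (intro not_prime_dvd_esym_low_degree[OF assms(1) Q'(1)]) auto
  moreover have "p dvd esym (\<lambda>x. x) Q' (card Q' - k)"
    using prime_dvd_esym_quotients[of "{1..n} - {i}" p k] assms(1,2) Ints \<open>k \<le> card Q'\<close>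
    by (simp add: Q'_def)
  ultimately show False
    by contradiction
qed

theorem lemma2p2:
  fixes n k :: nat
  assumes "1 \<le> k" and "k < n"
    and "\<exists>p::nat. prime p \<and> real p > max (real ((k+2)*(k+3)) / 2) (real (3*k+8))
           \<and> real n / real (k+3) < real p \<and> real p \<le> real n / real (k+1)"
  shows "\<forall>i\<in>{1..n}. S n i k \<notin> \<int>"
proof
  fix i
  from assms(3) obtain p :: nat where "prime p" "real ((k + 2) * (k + 3)) < real (2 * p)"
    "real (3 * k + 8) < real p" "real ((k + 1) * p) \<le> real n" "real n < real ((k + 3) * p)"
    by (auto simp: field_simps)
  then have "prime p" "(k + 2) * (k + 3) < 2 * p" "3 * k + 8 < p" "(k + 1) * p \<le> n" "n < (k + 3) * p"
    by (simp_all only: of_nat_less_iff of_nat_le_iff)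
  moreover have "S n i k = esym (\<lambda>j. 1 / real j) ({1..n} - {i}) k"
    by (simp add: S_def esym_def)
  ultimately show "S n i k \<notin> \<int>"
    using esym_inverse_not_Ints[of p k n] assms(1) by simp
qed

end
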